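(* Every graphing is a modeling. That is, let $V$ be a standard Borel space with a probability measure $\mu$ and let $T_1,\dots,T_k$ be measure-preserving Borel involutions of $V$; let $\mathbf G$ be the graph on $V$ in which distinct $x,y$ are adjacent iff $T_j(x)=y$ for some $1\le j\le k$. Then $\mathbf G$ (with the Borel $\sigma$-algebra of $V$) is a relational sample space, and hence $(\mathbf G,\mu)$ is a modeling.
   Context: A relational sample space is a graph (or relational structure) whose domain is a standard Borel space such that for every $p$ and every first-order formula $\phi$ with free variables among $x_1,\dots,x_p$, the set $\{(v_1,\dots,v_p)\in V^p:\mathbf G\models\phi(v_1,\dots,v_p)\}$ is measurable with respect to the product $\sigma$-algebra of $V^p$. A modeling is a relational sample space equipped with a probability measure. *)

theory Defs
  imports "HOL-Probability.Probability"
begin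

definition standard_borel :: "'a measure \<Rightarrow> bool" where
  "standard_borel M \<longleftrightarrow>
     (\<exists>X. topspace X = space M \<and> completely_metrizable_space X \<and> separable_space X \<and>
          sets M = sigma_sets (space M) {U. openin X U})"

datatype fo_formula =
    FEq nat nat
  | FAdj nat nat
  | FNot fo_formula
  | FAnd fo_formula fo_formula
  | FEx nat fo_formula

fun free_vars :: "fo_formula \<Rightarrow> nat set" where
  "free_vars (FEq i j) = {i, j}"
| "free_vars (FAdj i j) = {i, j}"
| "free_vars (FNot \<phi>) = free_vars \<phi>"
| "free_vars (FAnd \<phi> \<psi>) = free_vars \<phi> \<union> free_vars \<psi>"
| "free_vars (FEx i \<phi>) = free_vars \<phi> - {i}"

fun fo_sat :: "'a set \<Rightarrow> ('a \<Rightarrow> 'a \<Rightarrow> bool) \<Rightarrow> (nat \<Rightarrow> 'a) \<Rightarrow> fo_formula \<Rightarrow> bool" where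
  "fo_sat V E v (FEq i j) = (v i = v j)"
| "fo_sat V E v (FAdj i j) = E (v i) (v j)"
| "fo_sat V E v (FNot \<phi>) = (\<not> fo_sat V E v \<phi>)"
| "fo_sat V E v (FAnd \<phi> \<psi>) = (fo_sat V E v \<phi> \<and> fo_sat V E v \<psi>)"
| "fo_sat V E v (FEx i \<phi>) = (\<exists>a\<in>V. fo_sat V E (v(i := a)) \<phi>)"

definition relational_sample_space :: "'a measure \<Rightarrow> ('a \<Rightarrow> 'a \<Rightarrow> bool) \<Rightarrow> bool" where
  "relational_sample_space M E \<longleftrightarrow>
     standard_borel M \<and>
     (\<forall>p \<phi>. free_vars \<phi> \<subseteq> {..<p} \<longrightarrow>
        {v \<in> space (PiM {..<p} (\<lambda>_. M)). fo_sat (space M) E v \<phi>} \<in> sets (PiM {..<p} (\<lambda>_. M)))"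

definition modeling :: "'a measure \<Rightarrow> ('a \<Rightarrow> 'a \<Rightarrow> bool) \<Rightarrow> bool" where
  "modeling M E \<longleftrightarrow> relational_sample_space M E \<and> prob_space M"

end

theory Submission
  imports Defs
begin

text \<open>
  Call two assignments n-equivalent on a set of variables if the same equalities hold between the
  images of their entries under words of length at most n in the involutions. By induction on
  formulas, for each formula there is an n such that n-equivalent assignments satisfy it
  simultaneously. Only the existential quantifier needs an argument, and it costs a factor 3:
  a witness a within distance 2n of the first tuple is copied along the word that reaches it;
  otherwise a is matched by a point b of the same n-type that is farther than 2n from the second
  tuple. Such b exists by counting: points within distance 2n of the tuples correspond
  bijectively on the two sides, so if every point of the n-type of a were near the second tuple,
  that type would be finite and in bijection with its part near the first tuple, which misses a.

  Consequently a definable set is a finite union of classes of assignments with the same pattern.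
  Each class is measurable since countably many Borel sets separate the points of a standard
  Borel space, which makes the set where two measurable maps into it agree measurable.
\<close>

section \<open>Standard Borel spaces\<close>

lemma (in Metric_space) separable_imp_second_countable:
  assumes "separable_space mtopology"
  shows "second_countable mtopology"
proof -
  obtain C where C: "countable C" "C \<subseteq> M" "mtopology closure_of C = M"
    using assms unfolding separable_space_def by auto
  let ?B = "(\<lambda>(q, r). mball q (of_rat r)) ` (C \<times> (UNIV :: rat set))"
  have "\<exists>V\<in>?B. x \<in> V \<and> V \<subseteq> U" if U: "openin mtopology U" "x \<in> U" for U x
  proof -
    obtain r where r: "r > 0" "mball x r \<subseteq> U"
      using U openin_mtopology by blast
    have "x \<in> M"
      using U openin_subset by fastforce
    then have "x \<in> mtopology closure_of C"
      using C(3) by simp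
    then obtain q where q: "q \<in> C" "d x q < r/3"
      using \<open>r > 0\<close> unfolding metric_closure_of by (force dest: spec[of _ "r/3"])
    obtain s where s: "s \<in> \<rat>" "r/3 < s" "s < 2*r/3"
      using Rats_dense_in_real[of "r/3" "2*r/3"] \<open>r > 0\<close> by auto
    have "mball q s \<subseteq> mball x r"
    proof
      fix y assume "y \<in> mball q s"
      then show "y \<in> mball x r"
        using triangle[of x q y] \<open>x \<in> M\<close> q s C(2) by (auto simp: commute)
    qed
    moreover have "x \<in> mball q s"
      using \<open>x \<in> M\<close> q s C(2) by (auto simp: commute)
    moreover have "mball q s \<in> ?B"
      using q(1) s(1) by (force elim: Rats_cases)
    ultimately show ?thesis
      using r(2) by (meson subset_trans)
  qed
  moreover have "countable ?B"
    using C(1) by auto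
  ultimately show ?thesis
    unfolding second_countable_def by (intro exI[of _ ?B]) auto
qed

lemma standard_borel_separating_sets:
  assumes "standard_borel M"
  obtains B where "countable B" "B \<subseteq> sets M"
    "\<And>x y. x \<in> space M \<Longrightarrow> y \<in> space M \<Longrightarrow> x \<noteq> y \<Longrightarrow> \<exists>U\<in>B. x \<in> U \<and> y \<notin> U"
proof -
  obtain X where X: "topspace X = space M" "completely_metrizable_space X" "separable_space X"
    "sets M = sigma_sets (space M) {U. openin X U}"
    using assms unfolding standard_borel_def by blast
  obtain S d where Sd: "Metric_space S d" "X = Metric_space.mtopology S d"
    using X(2) unfolding completely_metrizable_space_def by blast
  have "separable_space (Metric_space.mtopology S d)"
    using X(3) unfolding Sd(2) .
  then have "second_countable X"
    unfolding Sd(2) by (rule Metric_space.separable_imp_second_countable[OF Sd(1)])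
  then obtain B where B: "countable B" "\<forall>V\<in>B. openin X V"
      "\<forall>U x. openin X U \<and> x \<in> U \<longrightarrow> (\<exists>V\<in>B. x \<in> V \<and> V \<subseteq> U)"
    unfolding second_countable_def by auto
  have "t1_space X"
    using X(2) by (simp add: completely_metrizable_imp_metrizable_space metrizable_imp_t1_space)
  have "\<exists>V\<in>B. x \<in> V \<and> y \<notin> V" if "x \<in> space M" "y \<in> space M" "x \<noteq> y" for x y
  proof -
    have "x \<in> topspace X" "y \<in> topspace X"
      using that(1,2) X(1) by simp_all
    then obtain U where "openin X U" "x \<in> U" "y \<notin> U"
      using \<open>t1_space X\<close> \<open>x \<noteq> y\<close> unfolding t1_space_def by blast
    moreover from this obtain V where "V \<in> B" "x \<in> V" "V \<subseteq> U"
      using B(3) by blast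
    ultimately show ?thesis
      by blast
  qed
  moreover have "B \<subseteq> sets M"
    using B(2) X(4) by (auto intro: sigma_sets.Basic)
  ultimately show thesis
    using that B(1) by blast
qed

lemma sets_Collect_eq_standard_borel:
  assumes "standard_borel M" "f \<in> N \<rightarrow>\<^sub>M M" "g \<in> N \<rightarrow>\<^sub>M M"
  shows "{z\<in>space N. f z = g z} \<in> sets N"
proof -
  obtain B where B: "countable B" "B \<subseteq> sets M"
    "\<And>x y. x \<in> space M \<Longrightarrow> y \<in> space M \<Longrightarrow> x \<noteq> y \<Longrightarrow> \<exists>U\<in>B. x \<in> U \<and> y \<notin> U"
    using standard_borel_separating_sets[OF assms(1)] by blast
  have "{z\<in>space N. f z = g z} = space N - (\<Union>U\<in>B. (f -` U \<inter> space N) - (g -` U \<inter> space N))"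
  proof (intro set_eqI iffI)
    fix z assume z: "z \<in> space N - (\<Union>U\<in>B. (f -` U \<inter> space N) - (g -` U \<inter> space N))"
    then have "f z \<in> space M" "g z \<in> space M"
      using assms(2,3) by (auto simp: measurable_space)
    with z B(3)[of "f z" "g z"] B(3)[of "g z" "f z"] show "z \<in> {z\<in>space N. f z = g z}"
      by blast
  qed auto
  also have "\<dots> \<in> sets N"
    using B(1,2) assms(2,3) by (intro sets.Diff sets.top sets.countable_UN') (auto intro: measurable_sets)
  finally show ?thesis .
qed

section \<open>Locality of first-order formulas in a graphing\<close>

lemma finite_free_vars: "finite (free_vars \<phi>)"
  by (induction \<phi>) auto

lemma card_image_eq_if_same_kernel:
  assumes "\<And>p q. p \<in> Q \<Longrightarrow> q \<in> Q \<Longrightarrow> f p = f q \<longleftrightarrow> g p = g q"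
  shows "card (f ` Q) = card (g ` Q)"
proof -
  define h where "h y = g (inv_into Q f y)" for y
  have h: "h (f p) = g p" if "p \<in> Q" for p
  proof -
    have "inv_into Q f (f p) \<in> Q" "f (inv_into Q f (f p)) = f p"
      using that by (simp_all add: inv_into_into f_inv_into_f)
    then show ?thesis
      unfolding h_def using assms that by blast
  qed
  have "inj_on h (f ` Q)"
  proof (rule inj_onI)
    fix y y' assume "y \<in> f ` Q" "y' \<in> f ` Q" "h y = h y'"
    then obtain p q where "p \<in> Q" "q \<in> Q" "y = f p" "y' = f q" "g p = g q"
      using h by auto
    then show "y = y'"
      using assms by blast
  qed
  moreover have "h ` f ` Q = g ` Q"
    unfolding image_image using h by (rule image_cong[OF refl])
  ultimately show ?thesis
    by (metis card_image)
qed

lemma not_subset_image_if_same_kernel: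
  assumes "finite P"
    and "\<And>p. p \<in> P \<Longrightarrow> f p \<in> C \<longleftrightarrow> g p \<in> C"
    and "\<And>p q. p \<in> P \<Longrightarrow> q \<in> P \<Longrightarrow> f p = f q \<longleftrightarrow> g p = g q"
    and "a \<in> C" "a \<notin> f ` P"
  shows "\<not> C \<subseteq> g ` P"
proof
  assume "C \<subseteq> g ` P"
  define Q where "Q = {p \<in> P. g p \<in> C}"
  have "Q \<subseteq> P"
    by (simp add: Q_def)
  have gQ: "g ` Q = C"
    using \<open>C \<subseteq> g ` P\<close> by (auto simp: Q_def)
  have "finite C"
    unfolding gQ[symmetric] using assms(1) \<open>Q \<subseteq> P\<close> by (metis finite_subset finite_imageI)
  moreover have "f ` Q \<subset> C"
  proof -
    have "f ` Q \<subseteq> C"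
      using assms(2) \<open>Q \<subseteq> P\<close> unfolding Q_def by blast
    moreover have "a \<notin> f ` Q"
      using assms(5) \<open>Q \<subseteq> P\<close> by blast
    ultimately show ?thesis
      using assms(4) by blast
  qed
  ultimately have "card (f ` Q) < card (g ` Q)"
    unfolding gQ by (rule psubset_card_mono)
  moreover have "card (f ` Q) = card (g ` Q)"
    using assms(3) \<open>Q \<subseteq> P\<close> by (intro card_image_eq_if_same_kernel) blast
  ultimately show False
    by simp
qed

locale involutions =
  fixes V :: "'a set" and k :: nat and T :: "nat \<Rightarrow> 'a \<Rightarrow> 'a"
  assumes T_closed: "j \<in> {1..k} \<Longrightarrow> x \<in> V \<Longrightarrow> T j x \<in> V"
    and T_involutive: "j \<in> {1..k} \<Longrightarrow> x \<in> V \<Longrightarrow> T j (T j x) = x"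
begin

definition adj :: "'a \<Rightarrow> 'a \<Rightarrow> bool" where
  "adj x y \<longleftrightarrow> x \<noteq> y \<and> (\<exists>j\<in>{1..k}. T j x = y)"

definition words :: "nat \<Rightarrow> nat list set" where
  "words n = {w. set w \<subseteq> {1..k} \<and> length w \<le> n}"

definition act :: "nat list \<Rightarrow> 'a \<Rightarrow> 'a" where
  "act w x = foldr T w x"

definition local_equiv :: "nat \<Rightarrow> nat set \<Rightarrow> (nat \<Rightarrow> 'a) \<Rightarrow> (nat \<Rightarrow> 'a) \<Rightarrow> bool" where
  "local_equiv n S v v' \<longleftrightarrow> (\<forall>i\<in>S. \<forall>i'\<in>S. \<forall>u\<in>words n. \<forall>u'\<in>words n.
      act u (v i) = act u' (v i') \<longleftrightarrow> act u (v' i) = act u' (v' i'))"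

definition point_type :: "nat \<Rightarrow> 'a \<Rightarrow> (nat list \<times> nat list) set" where
  "point_type n a = {(u, u'). u \<in> words n \<and> u' \<in> words n \<and> act u a = act u' a}"

definition reach :: "nat \<Rightarrow> nat set \<Rightarrow> (nat \<Rightarrow> 'a) \<Rightarrow> 'a set" where
  "reach n S v = (\<lambda>(i, w). act w (v i)) ` (S \<times> words n)"

lemma finite_words: "finite (words n)"
  unfolding words_def by (rule finite_lists_length_le) simp

lemma words_mono: "w \<in> words m \<Longrightarrow> m \<le> n \<Longrightarrow> w \<in> words n"
  unfolding words_def by auto

lemma append_in_words: "u \<in> words m \<Longrightarrow> w \<in> words n \<Longrightarrow> u @ w \<in> words (m + n)"
  unfolding words_def by auto

lemma act_Nil [simp]: "act [] x = x"
  unfolding act_def by simp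

lemma act_Cons [simp]: "act (j # w) x = T j (act w x)"
  unfolding act_def by simp

lemma act_append: "act (u @ w) x = act u (act w x)"
  unfolding act_def by simp

lemma act_closed: "w \<in> words n \<Longrightarrow> x \<in> V \<Longrightarrow> act w x \<in> V"
  unfolding words_def by (induction w) (auto intro: T_closed)

lemma act_rev_act: "w \<in> words n \<Longrightarrow> x \<in> V \<Longrightarrow> act (rev w) (act w x) = x"
proof (induction w)
  case (Cons j w)
  then have "w \<in> words n" "j \<in> {1..k}"
    unfolding words_def by auto
  with Cons show ?case
    by (simp add: act_append T_involutive act_closed)
qed simp

lemma not_in_reach_act_neq:
  assumes "c \<in> V" "c \<notin> reach (2*n) S v" "u \<in> words n" "u' \<in> words n" "i \<in> S"
  shows "act u c \<noteq> act u' (v i)"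
proof
  assume "act u c = act u' (v i)"
  then have "c = act (rev u @ u') (v i)"
    using act_rev_act[OF assms(3,1)] by (simp add: act_append)
  moreover have "rev u @ u' \<in> words (2*n)"
    using append_in_words[of "rev u" n u' n] assms(3,4) by (simp add: words_def mult_2)
  ultimately have "c \<in> reach (2*n) S v"
    unfolding reach_def using assms(5) by (auto intro: image_eqI[of _ _ "(i, rev u @ u')"])
  with assms(2) show False ..
qed

lemma point_type_eq_iff:
  "point_type n a = point_type n b \<longleftrightarrow>
     (\<forall>u\<in>words n. \<forall>u'\<in>words n. act u a = act u' a \<longleftrightarrow> act u b = act u' b)"
  unfolding point_type_def set_eq_iff by auto

lemma local_equiv_mono:
  assumes "local_equiv n S v v'" "m \<le> n" "S' \<subseteq> S"
  shows "local_equiv m S' v v'"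
  unfolding local_equiv_def
proof (intro ballI)
  fix i i' u u' assume "i \<in> S'" "i' \<in> S'" "u \<in> words m" "u' \<in> words m"
  with assms show "act u (v i) = act u' (v i') \<longleftrightarrow> act u (v' i) = act u' (v' i')"
    unfolding local_equiv_def using words_mono by blast
qed

lemma local_equiv_sym: "local_equiv n S v v' \<Longrightarrow> local_equiv n S v' v"
  unfolding local_equiv_def by blast

lemma local_equivD:
  "local_equiv n S v v' \<Longrightarrow> i \<in> S \<Longrightarrow> i' \<in> S \<Longrightarrow> u \<in> words n \<Longrightarrow> u' \<in> words n \<Longrightarrow>
    act u (v i) = act u' (v i') \<longleftrightarrow> act u (v' i) = act u' (v' i')"
  unfolding local_equiv_def by blast

lemma local_equiv_insertI:
  assumes "x \<notin> S" "local_equiv n S v v'" "point_type n a = point_type n b"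
    and "\<And>i u u'. i \<in> S \<Longrightarrow> u \<in> words n \<Longrightarrow> u' \<in> words n \<Longrightarrow>
           act u a = act u' (v i) \<longleftrightarrow> act u b = act u' (v' i)"
  shows "local_equiv n (insert x S) (v(x := a)) (v'(x := b))"
  using assms unfolding local_equiv_def point_type_eq_iff by (auto simp: eq_commute)

lemma point_type_act_eq:
  assumes "local_equiv (3*n) S v v'" "i \<in> S" "w \<in> words (2*n)"
  shows "point_type n (act w (v i)) = point_type n (act w (v' i))"
  unfolding point_type_eq_iff
proof (intro ballI)
  fix u u' assume "u \<in> words n" "u' \<in> words n"
  then have "u @ w \<in> words (3*n)" "u' @ w \<in> words (3*n)"
    using append_in_words assms(3) by fastforce+
  from local_equivD[OF assms(1,2,2) this]
  show "act u (act w (v i)) = act u' (act w (v i)) \<longleftrightarrow>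
        act u (act w (v' i)) = act u' (act w (v' i))"
    by (simp add: act_append)
qed

lemma local_equiv_extend_near:
  assumes "x \<notin> S" "local_equiv (3*n) S v v'" "i \<in> S" "w \<in> words (2*n)"
  shows "local_equiv n (insert x S) (v(x := act w (v i))) (v'(x := act w (v' i)))"
proof (rule local_equiv_insertI[OF assms(1)])
  show "local_equiv n S v v'"
    using assms(2) by (rule local_equiv_mono) auto
  show "point_type n (act w (v i)) = point_type n (act w (v' i))"
    using assms(2-4) by (rule point_type_act_eq)
  fix i' u u' assume "i' \<in> S" "u \<in> words n" "u' \<in> words n"
  moreover from this have "u @ w \<in> words (3*n)" "u' \<in> words (3*n)"
    using append_in_words assms(4) words_mono by fastforce+
  ultimately have "act (u @ w) (v i) = act u' (v i') \<longleftrightarrow> act (u @ w) (v' i) = act u' (v' i')"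
    using local_equivD[OF assms(2,3)] by blast
  then show "act u (act w (v i)) = act u' (v i') \<longleftrightarrow> act u (act w (v' i)) = act u' (v' i')"
    by (simp add: act_append)
qed

lemma local_equiv_extend_far:
  assumes "x \<notin> S" "local_equiv n S v v'" "point_type n a = point_type n b"
    and "a \<in> V" "a \<notin> reach (2*n) S v" "b \<in> V" "b \<notin> reach (2*n) S v'"
  shows "local_equiv n (insert x S) (v(x := a)) (v'(x := b))"
proof (rule local_equiv_insertI[OF assms(1-3)])
  fix i u u' assume "i \<in> S" "u \<in> words n" "u' \<in> words n"
  then show "act u a = act u' (v i) \<longleftrightarrow> act u b = act u' (v' i)"
    using not_in_reach_act_neq[OF assms(4,5)] not_in_reach_act_neq[OF assms(6,7)] by blast
qed

lemma exists_same_type_outside_reach: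
  assumes "finite S" "local_equiv (3*n) S v v'" "\<forall>i\<in>S. v i \<in> V" "\<forall>i\<in>S. v' i \<in> V"
    and "a \<in> V" "a \<notin> reach (2*n) S v"
  shows "\<exists>b\<in>V. point_type n b = point_type n a \<and> b \<notin> reach (2*n) S v'"
proof -
  define C where "C = {b \<in> V. point_type n b = point_type n a}"
  have "\<not> C \<subseteq> (\<lambda>(i, w). act w (v' i)) ` (S \<times> words (2*n))"
  proof (rule not_subset_image_if_same_kernel[where f = "\<lambda>(i, w). act w (v i)"])
    show "finite (S \<times> words (2*n))"
      using assms(1) finite_words by simp
    show "(case p of (i, w) \<Rightarrow> act w (v i)) \<in> C \<longleftrightarrow> (case p of (i, w) \<Rightarrow> act w (v' i)) \<in> C"
      if "p \<in> S \<times> words (2*n)" for p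
      using that assms(3,4) point_type_act_eq[OF assms(2)]
      by (auto simp: C_def act_closed)
    show "(case p of (i, w) \<Rightarrow> act w (v i)) = (case q of (i, w) \<Rightarrow> act w (v i)) \<longleftrightarrow>
          (case p of (i, w) \<Rightarrow> act w (v' i)) = (case q of (i, w) \<Rightarrow> act w (v' i))"
      if "p \<in> S \<times> words (2*n)" "q \<in> S \<times> words (2*n)" for p q
      using that local_equivD[OF assms(2)] words_mono[of _ "2*n" "3*n"] by auto
    show "a \<in> C"
      using assms(5) by (simp add: C_def)
    show "a \<notin> (\<lambda>(i, w). act w (v i)) ` (S \<times> words (2*n))"
      using assms(6) by (simp add: reach_def)
  qed
  then show ?thesis
    by (auto simp: C_def reach_def)
qed

lemma local_equiv_extend:
  assumes "finite S" "x \<notin> S" "local_equiv (3*n) S v v'" "\<forall>i\<in>S. v i \<in> V" "\<forall>i\<in>S. v' i \<in> V"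
    and "a \<in> V"
  shows "\<exists>b\<in>V. local_equiv n (insert x S) (v(x := a)) (v'(x := b))"
proof (cases "a \<in> reach (2*n) S v")
  case True
  then obtain i w where "i \<in> S" "w \<in> words (2*n)" "a = act w (v i)"
    unfolding reach_def by auto
  then show ?thesis
    using assms(2,3,5) local_equiv_extend_near act_closed by blast
next
  case False
  then obtain b where "b \<in> V" "point_type n b = point_type n a" "b \<notin> reach (2*n) S v'"
    using exists_same_type_outside_reach assms by blast
  moreover have "local_equiv n S v v'"
    using assms(3) by (rule local_equiv_mono) auto
  ultimately show ?thesis
    using assms(2,6) False local_equiv_extend_far by metis
qed

definition local_formula :: "nat \<Rightarrow> fo_formula \<Rightarrow> bool" where
  "local_formula n \<phi> \<longleftrightarrow> (\<forall>v v'. (\<forall>i\<in>free_vars \<phi>. v i \<in> V) \<longrightarrow> (\<forall>i\<in>free_vars \<phi>. v' i \<in> V) \<longrightarrow>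
     local_equiv n (free_vars \<phi>) v v' \<longrightarrow> fo_sat V adj v \<phi> = fo_sat V adj v' \<phi>)"

lemma local_formulaD:
  "local_formula n \<phi> \<Longrightarrow> \<forall>i\<in>free_vars \<phi>. v i \<in> V \<Longrightarrow> \<forall>i\<in>free_vars \<phi>. v' i \<in> V \<Longrightarrow>
    local_equiv n (free_vars \<phi>) v v' \<Longrightarrow> fo_sat V adj v \<phi> = fo_sat V adj v' \<phi>"
  unfolding local_formula_def by blast

lemma local_formula_FEq: "local_formula 0 (FEq i j)"
  unfolding local_formula_def
proof (intro allI impI)
  fix v v' assume "local_equiv 0 (free_vars (FEq i j)) v v'"
  from local_equivD[OF this, of i j "[]" "[]"]
  show "fo_sat V adj v (FEq i j) = fo_sat V adj v' (FEq i j)"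
    by (simp add: words_def)
qed

lemma local_formula_FAdj: "local_formula 1 (FAdj i j)"
  unfolding local_formula_def
proof (intro allI impI)
  fix v v' assume equiv: "local_equiv 1 (free_vars (FAdj i j)) v v'"
  have "v i = v j \<longleftrightarrow> v' i = v' j"
    using local_equivD[OF equiv, of i j "[]" "[]"] by (simp add: words_def)
  moreover have "T l (v i) = v j \<longleftrightarrow> T l (v' i) = v' j" if "l \<in> {1..k}" for l
    using local_equivD[OF equiv, of i j "[l]" "[]"] that by (simp add: words_def)
  ultimately show "fo_sat V adj v (FAdj i j) = fo_sat V adj v' (FAdj i j)"
    by (auto simp: adj_def)
qed

lemma local_formula_FNot: "local_formula n \<phi> \<Longrightarrow> local_formula n (FNot \<phi>)"
  unfolding local_formula_def by simp

lemma local_formula_FAnd: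
  assumes "local_formula m \<phi>" "local_formula n \<psi>"
  shows "local_formula (max m n) (FAnd \<phi> \<psi>)"
  unfolding local_formula_def
proof (intro allI impI)
  fix v v' assume "\<forall>i\<in>free_vars (FAnd \<phi> \<psi>). v i \<in> V" "\<forall>i\<in>free_vars (FAnd \<phi> \<psi>). v' i \<in> V"
    and equiv: "local_equiv (max m n) (free_vars (FAnd \<phi> \<psi>)) v v'"
  moreover have "local_equiv m (free_vars \<phi>) v v'" "local_equiv n (free_vars \<psi>) v v'"
    using equiv by (auto elim: local_equiv_mono)
  ultimately have "fo_sat V adj v \<phi> = fo_sat V adj v' \<phi>" "fo_sat V adj v \<psi> = fo_sat V adj v' \<psi>"
    using local_formulaD[OF assms(1)] local_formulaD[OF assms(2)] by simp_all
  then show "fo_sat V adj v (FAnd \<phi> \<psi>) = fo_sat V adj v' (FAnd \<phi> \<psi>)"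
    by simp
qed

lemma fo_sat_FEx_transfer:
  assumes "local_formula n \<psi>"
    and "\<forall>i\<in>free_vars (FEx x \<psi>). v i \<in> V" "\<forall>i\<in>free_vars (FEx x \<psi>). v' i \<in> V"
    and "local_equiv (3*n) (free_vars (FEx x \<psi>)) v v'" "fo_sat V adj v (FEx x \<psi>)"
  shows "fo_sat V adj v' (FEx x \<psi>)"
proof -
  obtain a where a: "a \<in> V" "fo_sat V adj (v(x := a)) \<psi>"
    using assms(5) by auto
  have "finite (free_vars (FEx x \<psi>))" "x \<notin> free_vars (FEx x \<psi>)"
    by (simp_all add: finite_free_vars)
  from local_equiv_extend[OF this assms(4,2,3) a(1)]
  obtain b where b: "b \<in> V" "local_equiv n (insert x (free_vars (FEx x \<psi>))) (v(x := a)) (v'(x := b))"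
    by blast
  from b(2) have "local_equiv n (free_vars \<psi>) (v(x := a)) (v'(x := b))"
    by (rule local_equiv_mono) auto
  moreover have "\<forall>i\<in>free_vars \<psi>. (v(x := a)) i \<in> V" "\<forall>i\<in>free_vars \<psi>. (v'(x := b)) i \<in> V"
    using assms(2,3) a(1) b(1) by auto
  ultimately have "fo_sat V adj (v'(x := b)) \<psi>"
    using local_formulaD[OF assms(1)] a(2) by blast
  with b(1) show ?thesis
    by auto
qed

lemma local_formula_FEx:
  assumes "local_formula n \<psi>"
  shows "local_formula (3*n) (FEx x \<psi>)"
  unfolding local_formula_def
proof (intro allI impI)
  fix v v' assume "\<forall>i\<in>free_vars (FEx x \<psi>). v i \<in> V" "\<forall>i\<in>free_vars (FEx x \<psi>). v' i \<in> V"
    and "local_equiv (3*n) (free_vars (FEx x \<psi>)) v v'"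
  with local_equiv_sym[OF this(3)] show "fo_sat V adj v (FEx x \<psi>) = fo_sat V adj v' (FEx x \<psi>)"
    using fo_sat_FEx_transfer[OF assms] by blast
qed

lemma ex_local_formula: "\<exists>n. local_formula n \<phi>"
  by (induction \<phi>)
    (blast intro: local_formula_FEq local_formula_FAdj local_formula_FNot local_formula_FAnd
       local_formula_FEx)+

end

section \<open>Measurability of definable sets\<close>

lemma sets_Collect_if_finite_classes:
  assumes "finite (\<pi> ` space N)"
    and "\<And>u. u \<in> space N \<Longrightarrow> {v \<in> space N. \<pi> v = \<pi> u} \<in> sets N"
    and "\<And>u v. u \<in> space N \<Longrightarrow> v \<in> space N \<Longrightarrow> \<pi> u = \<pi> v \<Longrightarrow> P u \<Longrightarrow> P v"
  shows "{v \<in> space N. P v} \<in> sets N"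
proof -
  have "{v \<in> space N. P v} = (\<Union>c \<in> \<pi> ` {u \<in> space N. P u}. {v \<in> space N. \<pi> v = c})"
  proof (intro equalityI subsetI)
    fix v assume "v \<in> (\<Union>c \<in> \<pi> ` {u \<in> space N. P u}. {v \<in> space N. \<pi> v = c})"
    then obtain u where "u \<in> space N" "P u" "v \<in> space N" "\<pi> v = \<pi> u"
      by auto
    then show "v \<in> {v \<in> space N. P v}"
      using assms(3)[of u v] by simp
  qed auto
  also have "\<dots> \<in> sets N"
    using assms(1,2) by (intro sets.finite_UN) (auto intro: finite_subset)
  finally show ?thesis .
qed

context involutions
begin

definition coincidences :: "nat \<Rightarrow> nat \<Rightarrow> (nat \<Rightarrow> 'a) \<Rightarrow> nat \<times> nat \<times> nat list \<times> nat list \<Rightarrow> bool" where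
  "coincidences n p v = restrict (\<lambda>(i, i', u, u'). act u (v i) = act u' (v i'))
     ({..<p} \<times> {..<p} \<times> words n \<times> words n)"

lemma finite_coincidences_image: "finite (coincidences n p ` X)"
proof (rule finite_subset)
  show "coincidences n p ` X \<subseteq> PiE ({..<p} \<times> {..<p} \<times> words n \<times> words n) (\<lambda>_. UNIV)"
    by (auto simp: coincidences_def)
  show "finite (PiE ({..<p} \<times> {..<p} \<times> words n \<times> words n) (\<lambda>_. UNIV :: bool set))"
    by (intro finite_PiE) (simp_all add: finite_words)
qed

lemma local_equiv_if_same_coincidences:
  assumes "coincidences n p u = coincidences n p v"
  shows "local_equiv n {..<p} u v"
  unfolding local_equiv_def
proof (intro ballI)
  fix i i' w w' assume "i \<in> {..<p}" "i' \<in> {..<p}" "w \<in> words n" "w' \<in> words n"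
  then have "(i, i', w, w') \<in> {..<p} \<times> {..<p} \<times> words n \<times> words n"
    by simp
  with assms show "act w (u i) = act w' (u i') \<longleftrightarrow> act w (v i) = act w' (v i')"
    unfolding coincidences_def by (metis (mono_tags) case_prod_conv restrict_apply')
qed

end

locale borel_graphing = involutions "space M" k T for M :: "'a measure" and k T +
  assumes standard_borel: "standard_borel M"
    and T_measurable: "j \<in> {1..k} \<Longrightarrow> T j \<in> M \<rightarrow>\<^sub>M M"
begin

lemma act_measurable: "w \<in> words n \<Longrightarrow> act w \<in> M \<rightarrow>\<^sub>M M"
proof (induction w)
  case Nil
  have "act [] = id"
    by auto
  then show ?case
    by simp
next
  case (Cons j w)
  then have "j \<in> {1..k}" "w \<in> words n"
    unfolding words_def by auto
  with Cons.IH have "(\<lambda>x. T j (act w x)) \<in> M \<rightarrow>\<^sub>M M"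
    by (intro measurable_compose[OF _ T_measurable])
  then show ?case
    by simp
qed

lemma act_component_measurable:
  assumes "i \<in> I" "w \<in> words n"
  shows "(\<lambda>v. act w (v i)) \<in> PiM I (\<lambda>_. M) \<rightarrow>\<^sub>M M"
proof -
  have "(\<lambda>v. v i) \<in> PiM I (\<lambda>_. M) \<rightarrow>\<^sub>M M"
    by (rule measurable_component_singleton) (use assms(1) in simp)
  from measurable_compose[OF this act_measurable[OF assms(2)]] show ?thesis .
qed

lemma sets_same_coincidences:
  "{v \<in> space (PiM {..<p} (\<lambda>_. M)). coincidences n p v = coincidences n p u} \<in> sets (PiM {..<p} (\<lambda>_. M))"
proof -
  let ?N = "PiM {..<p} (\<lambda>_. M)" and ?I = "{..<p} \<times> {..<p} \<times> words n \<times> words n"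
  have "{v \<in> space ?N. coincidences n p v t = c} \<in> sets ?N" if "t \<in> ?I" for t c
  proof -
    obtain i i' w w' where t: "t = (i, i', w, w')" "i < p" "i' < p" "w \<in> words n" "w' \<in> words n"
      using \<open>t \<in> ?I\<close> by auto
    have "{v \<in> space ?N. act w (v i) = act w' (v i')} \<in> sets ?N"
      using t by (intro sets_Collect_eq_standard_borel[OF standard_borel] act_component_measurable) auto
    then show ?thesis
      using \<open>t \<in> ?I\<close> unfolding coincidences_def t(1)
      by (cases c) (simp_all add: sets.sets_Collect_neg)
  qed
  then have "{v \<in> space ?N. \<forall>t\<in>?I. coincidences n p v t = coincidences n p u t} \<in> sets ?N"
    using finite_words by (intro sets.sets_Collect_finite_All) auto
  moreover have "coincidences n p v = coincidences n p u \<longleftrightarrow>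
                 (\<forall>t\<in>?I. coincidences n p v t = coincidences n p u t)" for v
    by (auto simp: fun_eq_iff coincidences_def)
  ultimately show ?thesis
    by simp
qed

lemma sets_fo_definable:
  assumes "free_vars \<phi> \<subseteq> {..<p}"
  shows "{v \<in> space (PiM {..<p} (\<lambda>_. M)). fo_sat (space M) adj v \<phi>} \<in> sets (PiM {..<p} (\<lambda>_. M))"
proof -
  obtain n where n: "local_formula n \<phi>"
    using ex_local_formula by blast
  show ?thesis
  proof (rule sets_Collect_if_finite_classes[of "coincidences n p"])
    fix u v assume uv: "u \<in> space (PiM {..<p} (\<lambda>_. M))" "v \<in> space (PiM {..<p} (\<lambda>_. M))"
      "coincidences n p u = coincidences n p v" "fo_sat (space M) adj u \<phi>"
    from local_equiv_if_same_coincidences[OF uv(3)] assms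
    have "local_equiv n (free_vars \<phi>) u v"
      by (rule local_equiv_mono[OF _ order_refl])
    moreover have "\<forall>i\<in>free_vars \<phi>. u i \<in> space M" "\<forall>i\<in>free_vars \<phi>. v i \<in> space M"
      using uv(1,2) assms by (auto simp: space_PiM PiE_iff)
    ultimately show "fo_sat (space M) adj v \<phi>"
      using local_formulaD[OF n] uv(4) by blast
  qed (simp_all add: finite_coincidences_image sets_same_coincidences)
qed

end

theorem lemma8p38:
  fixes \<mu> :: "'a measure" and k :: nat and T :: "nat \<Rightarrow> 'a \<Rightarrow> 'a"
  assumes "standard_borel \<mu>"
    and "prob_space \<mu>"
    and "\<And>j. j \<in> {1..k} \<Longrightarrow> T j \<in> \<mu> \<rightarrow>\<^sub>M \<mu>"
    and "\<And>j. j \<in> {1..k} \<Longrightarrow> distr \<mu> \<mu> (T j) = \<mu>"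
    and "\<And>j x. j \<in> {1..k} \<Longrightarrow> x \<in> space \<mu> \<Longrightarrow> T j (T j x) = x"
  shows "relational_sample_space \<mu> (\<lambda>x y. x \<noteq> y \<and> (\<exists>j\<in>{1..k}. T j x = y))
       \<and> modeling \<mu> (\<lambda>x y. x \<noteq> y \<and> (\<exists>j\<in>{1..k}. T j x = y))"
proof -
  interpret borel_graphing \<mu> k T
  proof
    show "T j x \<in> space \<mu>" if "j \<in> {1..k}" "x \<in> space \<mu>" for j x
      using measurable_space[OF assms(3)[OF that(1)] that(2)] .
  qed (use assms(1,3,5) in auto)
  have "(\<lambda>x y. x \<noteq> y \<and> (\<exists>j\<in>{1..k}. T j x = y)) = adj"
    by (simp add: adj_def fun_eq_iff)
  then have "relational_sample_space \<mu> (\<lambda>x y. x \<noteq> y \<and> (\<exists>j\<in>{1..k}. T j x = y))"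
    unfolding relational_sample_space_def using assms(1) sets_fo_definable by simp
  with assms(2) show ?thesis
    unfolding modeling_def by blast
qed

end
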